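(* Let $N\ge2$ and $r\ge1$ be integers, let $\mathbf z=(z_1,\dots,z_r)\in\mathbb C^r$ with $|z_i|\le1$ for all $i$ and $z_1\ne0$, and let $(s_1,\dots,s_r)\in U_r$. Then for $r=1$, $$\Big(1-\frac1{z_1}\Big)\mathrm{Li}^\star_{(z_1)}(s_1-1)_{\ge N}+\frac{z_1^{N-1}}{N^{s_1-1}}=\sum_{k\ge0}(-1)^k\frac{(s_1-1)_{k+1}}{(k+1)!}\mathrm{Li}^\star_{(z_1)}(s_1+k)_{\ge N},$$ and for $r>1$, $$\Big(1-\frac1{z_1}\Big)\mathrm{Li}^\star_{\mathbf z}(s_1-1,s_2,\dots,s_r)_{\ge N}+\frac1{z_1}\mathrm{Li}^\star_{(z_1z_2,z_3,\dots,z_r)}(s_1+s_2-1,s_3,\dots,s_r)_{\ge N}=\sum_{k\ge0}(-1)^k\frac{(s_1-1)_{k+1}}{(k+1)!}\mathrm{Li}^\star_{\mathbf z}(s_1+k,s_2,\dots,s_r)_{\ge N}.$$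
   Context: $U_r:=\{(s_1,\dots,s_r)\in\mathbb C^r:\Re(s_1+\cdots+s_i)>i\text{ for all }1\le i\le r\}$. For $|w_i|\le1$, the tail of the multiple polylogarithm-star function is $\mathrm{Li}^\star_{(w_1,\dots,w_d)}(s_1,\dots,s_d)_{\ge N}:=\sum_{n_1\ge n_2\ge\cdots\ge n_d\ge N}\frac{w_1^{n_1}\cdots w_d^{n_d}}{n_1^{s_1}\cdots n_d^{s_d}}$. The first term on the left-hand side is taken to be $0$ when $z_1=1$; when $z_1\ne1$ the series defining $\mathrm{Li}^\star_{\mathbf z}(s_1-1,s_2,\dots,s_r)_{\ge N}$ converges. $(s)_k=s(s+1)\cdots(s+k-1)$ is the Pochhammer symbol. *)

theory Defs
  imports "HOL-Analysis.Analysis"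
begin

text \<open>The argument list of LiStar_rev is the list of pairs (w_i, s_i) in REVERSED order
  (i.e. (w_d,s_d) first), so that the outermost summation runs over n_d >= N and the
  innermost over n_1 >= n_2:
  sum over n_d >= N of w_d^n_d / n_d^s_d times (sum over n_(d-1) >= n_d of ... ).\<close>

fun LiStar_rev :: "(complex \<times> complex) list \<Rightarrow> nat \<Rightarrow> complex" where
  "LiStar_rev [] N = 1"
| "LiStar_rev ((w, s) # xs) N =
     (\<Sum>n. w ^ (n + N) / (of_nat (n + N)) powr s * LiStar_rev xs (n + N))"

text \<open>LiStar ws ss N = Li^star_(w_1,...,w_d)(s_1,...,s_d)_{>= N}
  = sum over n_1 >= ... >= n_d >= N of prod_i w_i^n_i / n_i^s_i.\<close>
definition LiStar :: "complex list \<Rightarrow> complex list \<Rightarrow> nat \<Rightarrow> complex" where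
  "LiStar ws ss N = LiStar_rev (rev (zip ws ss)) N"

definition U_dom :: "complex list \<Rightarrow> bool" where
  "U_dom s \<longleftrightarrow> (\<forall>i. 1 \<le> i \<and> i \<le> length s \<longrightarrow> Re (\<Sum>j<i. s ! j) > real i)"

end

theory Submission
  imports Defs
begin

(*
  Write c_k(a) = -binom(1-a, k+1) = (-1)^k (a-1)_(k+1) / (k+1)!.  The k-th term of the series is the
  nested sum defining Li*_z(s_1, ..., s_r)_{>=N} in which the innermost layer (z_1, s_1) is applied to
  q |-> c_k(s_1) q^-k.  Summing over k first, the generalised binomial theorem gives
  q^-a sum_k c_k(a) q^-k = q^(1-a) - (q+1)^(1-a) for q >= 2, and weighting by w^q and summing over q >= p
  telescopes to (1 - 1/w) Li*_w(a-1)_{>=p} + w^(p-1) p^(1-a).  For r > 1 the boundary term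
  z_1^(n-1) n^(1-s_1) merges with the layer (z_2, s_2) into 1/z_1 times the layer (z_1 z_2, s_1 + s_2 - 1).
  Moving the k-sum inside is an interchange of absolutely convergent sums, controlled by decay exponents:
  with |w| <= 1, the layer f |-> (m |-> sum_{n>=m} w^n n^-s f n) turns a function decaying like m^-e into
  one decaying like m^-(e + Re s - 1) provided Re s + e > 1, and (s_1, ..., s_r) in U_r says precisely
  that this holds at every layer, starting from e = 0 for the family c_k(a) q^-k, which is summable in k
  uniformly in q >= 2.
*)

section \<open>Series estimates and rearrangements\<close>

lemma powr_diff_lower_bound:
  fixes x \<sigma> :: real
  assumes x: "x > 0" and \<sigma>: "\<sigma> > 1"
  shows "(\<sigma> - 1) * (x + 1) powr (-\<sigma>) \<le> x powr (1 - \<sigma>) - (x + 1) powr (1 - \<sigma>)"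
proof -
  have deriv: "((\<lambda>t. t powr (1 - \<sigma>)) has_real_derivative (1 - \<sigma>) * t powr (-\<sigma>)) (at t)" if "t > 0" for t
    using has_real_derivative_powr[OF that, of "1 - \<sigma>"] by simp
  have "continuous_on {x..x + 1} (\<lambda>t. t powr (1 - \<sigma>))"
    using x by (intro DERIV_continuous_on[OF has_field_derivative_at_within, OF deriv]) auto
  moreover have "(\<lambda>t. t powr (1 - \<sigma>)) differentiable (at t)" if "x < t" for t
    using deriv[of t] x that unfolding real_differentiable_def by auto
  ultimately obtain l \<xi> where \<xi>: "x < \<xi>" "\<xi> < x + 1" and l: "DERIV (\<lambda>t. t powr (1 - \<sigma>)) \<xi> :> l"
    and mvt: "(x + 1) powr (1 - \<sigma>) - x powr (1 - \<sigma>) = (x + 1 - x) * l"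
    using MVT[of x "x + 1" "\<lambda>t. t powr (1 - \<sigma>)"] by auto
  have "l = (1 - \<sigma>) * \<xi> powr (-\<sigma>)"
    using DERIV_unique[OF l deriv] x \<xi> by simp
  moreover have "(\<sigma> - 1) * (x + 1) powr (-\<sigma>) \<le> (\<sigma> - 1) * \<xi> powr (-\<sigma>)"
    using x \<xi> \<sigma> by (intro mult_left_mono powr_mono2') auto
  ultimately show ?thesis
    using mvt by (simp add: algebra_simps)
qed

lemma suminf_powr_tail_le:
  fixes \<sigma> :: real
  assumes \<sigma>: "\<sigma> > 1" and m: "m \<ge> 2"
  shows "summable (\<lambda>n. real (n + m) powr (-\<sigma>))"
    and "(\<Sum>n. real (n + m) powr (-\<sigma>)) \<le> 2 powr (\<sigma> - 1) / (\<sigma> - 1) * real m powr (1 - \<sigma>)"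
proof -
  show sm: "summable (\<lambda>n. real (n + m) powr (-\<sigma>))"
    using summable_real_powr_iff[of "-\<sigma>"] \<sigma> summable_iff_shift[of "\<lambda>n. real n powr (-\<sigma>)" m]
    by simp
  define F where "F n = (real (n + m) - 1) powr (1 - \<sigma>) / (\<sigma> - 1)" for n
  have step: "real (n + m) powr (-\<sigma>) \<le> F n - F (Suc n)" for n
    using powr_diff_lower_bound[of "real (n + m) - 1" \<sigma>] m \<sigma>
    by (simp add: F_def diff_divide_distrib[symmetric] pos_le_divide_eq mult.commute)
  have "(\<Sum>n<M. real (n + m) powr (-\<sigma>)) \<le> F 0" for M
  proof -
    have "(\<Sum>n<M. real (n + m) powr (-\<sigma>)) \<le> (\<Sum>n<M. F n - F (Suc n))"
      by (intro sum_mono step)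
    also have "\<dots> = F 0 - F M"
      by (rule sum_lessThan_telescope')
    also have "\<dots> \<le> F 0"
      using \<sigma> by (simp add: F_def)
    finally show ?thesis .
  qed
  then have "(\<Sum>n. real (n + m) powr (-\<sigma>)) \<le> (real m - 1) powr (1 - \<sigma>) / (\<sigma> - 1)"
    using suminf_le_const[OF sm] by (simp add: F_def)
  also have "\<dots> \<le> (real m / 2) powr (1 - \<sigma>) / (\<sigma> - 1)"
    using m \<sigma> by (intro divide_right_mono powr_mono2') auto
  also have "(real m / 2) powr (1 - \<sigma>) = 2 powr (\<sigma> - 1) * real m powr (1 - \<sigma>)"
    using powr_minus_divide[of "2::real" "1 - \<sigma>"] by (simp add: powr_divide)
  finally show "(\<Sum>n. real (n + m) powr (-\<sigma>)) \<le> 2 powr (\<sigma> - 1) / (\<sigma> - 1) * real m powr (1 - \<sigma>)"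
    by simp
qed

lemma summable_norm_powr_majorant:
  fixes b :: "nat \<Rightarrow> 'a::real_normed_vector"
  assumes b: "\<And>n. norm (b n) \<le> C * real (n + m) powr (-\<sigma>)" and \<sigma>: "\<sigma> > 1" and m: "m \<ge> 2"
  shows "summable (\<lambda>n. norm (b n))"
    and "(\<Sum>n. norm (b n)) \<le> C * (2 powr (\<sigma> - 1) / (\<sigma> - 1)) * real m powr (1 - \<sigma>)"
proof -
  have "0 \<le> C * real m powr (-\<sigma>)"
    using order_trans[OF norm_ge_zero b[of 0]] by simp
  then have C: "C \<ge> 0"
    using m by (simp add: zero_le_mult_iff)
  note tail = suminf_powr_tail_le[OF \<sigma> m]
  show sm: "summable (\<lambda>n. norm (b n))"
    by (rule summable_comparison_test'[OF summable_mult[OF tail(1)]]) (use b in simp)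
  have "(\<Sum>n. norm (b n)) \<le> (\<Sum>n. C * real (n + m) powr (-\<sigma>))"
    by (intro suminf_le b sm summable_mult tail(1))
  also have "\<dots> = C * (\<Sum>n. real (n + m) powr (-\<sigma>))"
    by (rule suminf_mult[OF tail(1)])
  also have "\<dots> \<le> C * (2 powr (\<sigma> - 1) / (\<sigma> - 1) * real m powr (1 - \<sigma>))"
    by (intro mult_left_mono tail(2) C)
  finally show "(\<Sum>n. norm (b n)) \<le> C * (2 powr (\<sigma> - 1) / (\<sigma> - 1)) * real m powr (1 - \<sigma>)"
    by (simp add: mult.assoc)
qed

lemma suminf_swap_summable_norm:
  fixes u :: "nat \<Rightarrow> nat \<Rightarrow> 'a::{banach,second_countable_topology}"
  assumes rows: "\<And>n. summable (\<lambda>k. norm (u n k))"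
    and total: "summable (\<lambda>n. \<Sum>k. norm (u n k))"
  shows "(\<lambda>k. \<Sum>n. u n k) sums (\<Sum>n. \<Sum>k. u n k)"
    and "summable (\<lambda>n. norm (u n k))"
proof -
  have infsum_eq: "infsum f UNIV = suminf f" if "summable (\<lambda>n. norm (f n))"
    for f :: "nat \<Rightarrow> 'b::banach"
    by (intro infsumI norm_summable_imp_has_sum that summable_sums summable_norm_cancel)
  have norm_infsum_eq: "infsum (\<lambda>k. norm (u n k)) UNIV = (\<Sum>k. norm (u n k))" for n
    using rows[of n] by (intro infsum_eq) simp
  have "Infinite_Sum.abs_summable_on (\<lambda>(n, k). u n k) (UNIV \<times> UNIV)"
    using rows total
    by (subst Infinite_Sum.abs_summable_on_Sigma_iff)
       (auto simp: norm_infsum_eq summable_on_UNIV_nonneg_real_iff suminf_nonneg)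
  then have sm: "(\<lambda>(n, k). u n k) summable_on UNIV \<times> UNIV"
    by (rule abs_summable_summable)
  have cols: "summable (\<lambda>n. norm (u n k))" for k
  proof (rule summable_comparison_test'[OF total])
    show "norm (norm (u n k)) \<le> (\<Sum>k. norm (u n k))" for n
      using sum_le_suminf[OF rows[of n], of "{k}"] by simp
  qed
  then show "summable (\<lambda>n. norm (u n k))" .
  have row_sums: "summable (\<lambda>n. norm (\<Sum>k. u n k))"
    by (rule summable_comparison_test'[OF total]) (simp add: summable_norm rows)
  have "(\<lambda>(k, n). u n k) summable_on UNIV \<times> UNIV"
    using summable_on_swap[of "\<lambda>(n, k). u n k" UNIV UNIV] sm by (simp add: case_prod_unfold)
  then have "(\<lambda>k. \<Sum>n. u n k) summable_on UNIV"
    using summable_on_Sigma_banach[of "\<lambda>k n. u n k" UNIV "\<lambda>_. UNIV"] by (simp add: infsum_eq[OF cols])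
  moreover have "infsum (\<lambda>k. \<Sum>n. u n k) UNIV = (\<Sum>n. \<Sum>k. u n k)"
    using infsum_swap_banach[of "\<lambda>n k. u n k" UNIV UNIV] sm
    by (simp add: infsum_eq[OF cols] infsum_eq[OF rows] infsum_eq[OF row_sums])
  ultimately show "(\<lambda>k. \<Sum>n. u n k) sums (\<Sum>n. \<Sum>k. u n k)"
    using has_sum_imp_sums has_sum_infsum by metis
qed

lemma norm_suminf_swap_le:
  fixes u :: "nat \<Rightarrow> nat \<Rightarrow> 'a::{banach,second_countable_topology}"
  assumes rows: "\<And>n. summable (\<lambda>k. norm (u n k))"
    and total: "summable (\<lambda>n. \<Sum>k. norm (u n k))"
  shows "summable (\<lambda>k. norm (\<Sum>n. u n k))"
    and "(\<Sum>k. norm (\<Sum>n. u n k)) \<le> (\<Sum>n. \<Sum>k. norm (u n k))"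
proof -
  have norms: "(\<lambda>k. \<Sum>n. norm (u n k)) sums (\<Sum>n. \<Sum>k. norm (u n k))"
    using suminf_swap_summable_norm(1)[of "\<lambda>n k. norm (u n k)"] rows total by simp
  have le: "norm (\<Sum>n. u n k) \<le> (\<Sum>n. norm (u n k))" for k
    by (rule summable_norm[OF suminf_swap_summable_norm(2)[OF rows total]])
  show sm: "summable (\<lambda>k. norm (\<Sum>n. u n k))"
    by (rule summable_comparison_test'[OF sums_summable[OF norms]]) (simp add: le)
  show "(\<Sum>k. norm (\<Sum>n. u n k)) \<le> (\<Sum>n. \<Sum>k. norm (u n k))"
    using suminf_le[OF le sm sums_summable[OF norms]] sums_unique[OF norms] by simp
qed

lemma sums_telescope_div:
  fixes A :: "nat \<Rightarrow> 'a::real_normed_field"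
  assumes lim: "A \<longlonglongrightarrow> 0" and w: "w \<noteq> 0" and X: "(\<lambda>n. A n - A (Suc n) / w) sums X"
  shows "X = (if w = 1 then 0 else (1 - 1 / w) * suminf A) + A 0 / w"
proof -
  have "(\<lambda>n. A n - A (Suc n)) sums A 0"
    using telescope_sums'[OF lim] by simp
  from sums_diff[OF X this]
  have tail: "(\<lambda>n. (1 - 1 / w) * A (Suc n)) sums (X - A 0)"
    by (simp add: algebra_simps)
  show ?thesis
  proof (cases "w = 1")
    case True
    then have "(\<lambda>n. 0) sums (X - A 0)"
      using tail by simp
    then show ?thesis
      using sums_unique2[OF _ sums_zero] True by fastforce
  next
    case False
    then have nz: "1 - 1 / w \<noteq> 0"
      by (simp add: field_simps)
    have "(\<lambda>n. A (Suc n)) sums ((X - A 0) / (1 - 1 / w))"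
      using sums_divide[OF tail, of "1 - 1 / w"] nz False by simp
    then have "suminf A = (X - A 0) / (1 - 1 / w) + A 0"
      by (simp add: sums_Suc_iff sums_iff)
    then show ?thesis
      using nz False by (simp add: field_simps)
  qed
qed

section \<open>Decay of sequences\<close>

(* Only arguments m >= 2 are constrained: the binomial family c_k(a) q^-k is not summable in k at q = 1. *)
definition decays :: "real \<Rightarrow> (nat \<Rightarrow> 'a::real_normed_vector) \<Rightarrow> bool" where
  "decays e f \<longleftrightarrow> (\<exists>C. \<forall>m\<ge>2. norm (f m) \<le> C * real m powr (-e))"

lemma decays_cong: "decays e f \<Longrightarrow> (\<And>m. m \<ge> 2 \<Longrightarrow> g m = f m) \<Longrightarrow> decays e g"
  unfolding decays_def by simp

lemma decays_mono:
  assumes "decays e f" "e' \<le> e"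
  shows "decays e' f"
proof -
  obtain C where C: "\<And>m. m \<ge> 2 \<Longrightarrow> norm (f m) \<le> C * real m powr (-e)"
    using assms(1) unfolding decays_def by blast
  have "0 \<le> C * 2 powr (-e)"
    using order_trans[OF norm_ge_zero C[of 2]] by simp
  then have "C \<ge> 0"
    by (simp add: zero_le_mult_iff)
  have "norm (f m) \<le> C * real m powr (-e')" if "m \<ge> 2" for m
    using C[OF that] order_trans mult_left_mono[OF powr_mono \<open>C \<ge> 0\<close>, of "-e" "-e'" "real m"]
      assms(2) that by fastforce
  then show ?thesis
    unfolding decays_def by blast
qed

lemma decays_lincomb:
  fixes f g h :: "nat \<Rightarrow> 'a::real_normed_algebra"
  assumes "decays e f" "decays e g" "\<And>m. m \<ge> 2 \<Longrightarrow> h m = c * f m + d * g m"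
  shows "decays e h"
proof -
  obtain C1 where C1: "\<And>m. m \<ge> 2 \<Longrightarrow> norm (f m) \<le> C1 * real m powr (-e)"
    using assms(1) unfolding decays_def by blast
  obtain C2 where C2: "\<And>m. m \<ge> 2 \<Longrightarrow> norm (g m) \<le> C2 * real m powr (-e)"
    using assms(2) unfolding decays_def by blast
  have "norm (h m) \<le> (norm c * C1 + norm d * C2) * real m powr (-e)" if "m \<ge> 2" for m
  proof -
    have "norm (h m) \<le> norm c * norm (f m) + norm d * norm (g m)"
      using assms(3)[OF that] norm_triangle_le[OF add_mono[OF norm_mult_ineq norm_mult_ineq]]
      by simp
    also have "\<dots> \<le> norm c * (C1 * real m powr (-e)) + norm d * (C2 * real m powr (-e))"
      by (intro add_mono mult_left_mono C1 C2 that norm_ge_zero)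
    finally show ?thesis
      by (simp add: algebra_simps)
  qed
  then show ?thesis
    unfolding decays_def by blast
qed

lemma decays_const: "decays 0 (\<lambda>_. c)"
  unfolding decays_def by (intro exI[of _ "norm c"]) simp

definition family_decays :: "real \<Rightarrow> (nat \<Rightarrow> nat \<Rightarrow> 'a::real_normed_vector) \<Rightarrow> bool" where
  "family_decays e g \<longleftrightarrow> (\<forall>m\<ge>2. summable (\<lambda>k. norm (g k m))) \<and> decays e (\<lambda>m. \<Sum>k. norm (g k m))"

lemma decays_suminf:
  fixes g :: "nat \<Rightarrow> nat \<Rightarrow> 'a::banach"
  assumes "family_decays e g"
  shows "decays e (\<lambda>p. \<Sum>k. g k p)"
proof -
  obtain C where C: "\<And>p. p \<ge> 2 \<Longrightarrow> norm (\<Sum>k. norm (g k p)) \<le> C * real p powr (-e)"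
    using assms unfolding family_decays_def decays_def by blast
  have "norm (\<Sum>k. g k p) \<le> C * real p powr (-e)" if "p \<ge> 2" for p
    using assms that summable_norm[of "\<lambda>k. g k p"] C[OF that]
    unfolding family_decays_def by (force intro: order_trans)
  then show ?thesis
    unfolding decays_def by blast
qed

section \<open>Nested polylogarithmic sums\<close>

definition polylog_layer :: "complex \<Rightarrow> complex \<Rightarrow> (nat \<Rightarrow> complex) \<Rightarrow> nat \<Rightarrow> complex" where
  "polylog_layer w s f m = (\<Sum>n. w ^ (n + m) / of_nat (n + m) powr s * f (n + m))"

lemma polylog_layer_cong:
  "(\<And>p. p \<ge> m \<Longrightarrow> f p = g p) \<Longrightarrow> polylog_layer w s f m = polylog_layer w s g m"
  unfolding polylog_layer_def by (intro suminf_cong) simp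

lemma norm_power_div_powr_le:
  assumes "norm w \<le> 1" "n \<noteq> 0"
  shows "norm (w ^ n / of_nat n powr s) \<le> real n powr (- Re s)"
proof -
  have "norm (w ^ n) \<le> 1"
    using assms(1) by (simp add: norm_power power_le_one)
  then have "norm (w ^ n / of_nat n powr s) \<le> 1 / real n powr Re s"
    using assms(2) by (simp add: norm_divide norm_powr_real_powr divide_right_mono)
  then show ?thesis
    by (simp add: powr_minus_divide)
qed

lemma polylog_layer_term_le:
  fixes f :: "nat \<Rightarrow> 'a::real_normed_vector"
  assumes "norm w \<le> 1" "\<And>p. p \<ge> 2 \<Longrightarrow> norm (f p) \<le> C * real p powr (-e)" "m \<ge> 2"
  shows "norm (w ^ (n + m) / of_nat (n + m) powr s) * norm (f (n + m))
           \<le> C * real (n + m) powr (-(Re s + e))"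
proof -
  have "norm (w ^ (n + m) / of_nat (n + m) powr s) * norm (f (n + m))
          \<le> real (n + m) powr (- Re s) * (C * real (n + m) powr (-e))"
    using assms by (intro mult_mono norm_power_div_powr_le assms(2)) auto
  also have "\<dots> = C * real (n + m) powr (-(Re s + e))"
    by (simp add: powr_add[symmetric] algebra_simps)
  finally show ?thesis .
qed

lemma polylog_layer_summable:
  assumes "norm w \<le> 1" "Re s + e > 1" "decays e f" "m \<ge> 2"
  shows "summable (\<lambda>n. norm (w ^ (n + m) / of_nat (n + m) powr s * f (n + m)))"
proof -
  obtain C where C: "\<And>p. p \<ge> 2 \<Longrightarrow> norm (f p) \<le> C * real p powr (-e)"
    using assms(3) unfolding decays_def by blast
  have "norm (w ^ (n + m) / of_nat (n + m) powr s * f (n + m)) \<le> C * real (n + m) powr (-(Re s + e))"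
    for n
    using polylog_layer_term_le[OF assms(1) C assms(4)] by (simp only: norm_mult)
  then show ?thesis
    by (rule summable_norm_powr_majorant(1)[OF _ assms(2,4)])
qed

lemma polylog_layer_decays:
  assumes "norm w \<le> 1" "Re s + e > 1" "decays e f"
  shows "decays (e + Re s - 1) (polylog_layer w s f)"
proof -
  obtain C where C: "\<And>p. p \<ge> 2 \<Longrightarrow> norm (f p) \<le> C * real p powr (-e)"
    using assms(3) unfolding decays_def by blast
  define K where "K = C * (2 powr (Re s + e - 1) / (Re s + e - 1))"
  have "norm (polylog_layer w s f m) \<le> K * real m powr (-(e + Re s - 1))" if m: "m \<ge> 2" for m
  proof -
    have term_le: "norm (w ^ (n + m) / of_nat (n + m) powr s * f (n + m))
                     \<le> C * real (n + m) powr (-(Re s + e))" for n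
      using polylog_layer_term_le[OF assms(1) C m] by (simp only: norm_mult)
    have "norm (polylog_layer w s f m)
            \<le> (\<Sum>n. norm (w ^ (n + m) / of_nat (n + m) powr s * f (n + m)))"
      unfolding polylog_layer_def by (rule summable_norm[OF polylog_layer_summable[OF assms m]])
    also have "\<dots> \<le> K * real m powr (1 - (Re s + e))"
      unfolding K_def by (rule summable_norm_powr_majorant(2)[OF term_le assms(2) m])
    finally show ?thesis
      by (simp add: algebra_simps)
  qed
  then show ?thesis
    unfolding decays_def by blast
qed

lemma polylog_layer_lincomb:
  assumes "norm w \<le> 1" "Re s + e > 1" "decays e f" "decays e g"
    and h: "\<And>p. p \<ge> 2 \<Longrightarrow> h p = c * f p + d * g p" and m: "m \<ge> 2"
  shows "polylog_layer w s h m = c * polylog_layer w s f m + d * polylog_layer w s g m"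
proof -
  define t where "t n = w ^ (n + m) / of_nat (n + m) powr s" for n
  have sf: "summable (\<lambda>n. t n * f (n + m))" and sg: "summable (\<lambda>n. t n * g (n + m))"
    unfolding t_def using polylog_layer_summable[OF assms(1,2) _ m] assms(3,4)
    by (auto intro: summable_norm_cancel)
  have "polylog_layer w s h m = (\<Sum>n. c * (t n * f (n + m)) + d * (t n * g (n + m)))"
    unfolding polylog_layer_def t_def using m by (intro suminf_cong) (simp add: h algebra_simps add_divide_distrib)
  also have "\<dots> = c * (\<Sum>n. t n * f (n + m)) + d * (\<Sum>n. t n * g (n + m))"
    using sf sg by (simp add: suminf_add[symmetric] suminf_mult summable_mult)
  finally show ?thesis
    by (simp add: polylog_layer_def t_def)
qed

lemma polylog_layer_suminf_swap:
  assumes w: "norm w \<le> 1" and s: "Re s + e > 1" and m: "m \<ge> 2"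
    and rows: "\<And>p. p \<ge> 2 \<Longrightarrow> summable (\<lambda>k. norm (g k p))"
    and C: "\<And>p. p \<ge> 2 \<Longrightarrow> norm (\<Sum>k. norm (g k p)) \<le> C * real p powr (-e)"
  shows "(\<lambda>k. polylog_layer w s (g k) m) sums polylog_layer w s (\<lambda>p. \<Sum>k. g k p) m"
    and "summable (\<lambda>k. norm (polylog_layer w s (g k) m))"
    and "(\<Sum>k. norm (polylog_layer w s (g k) m))
           \<le> C * (2 powr (Re s + e - 1) / (Re s + e - 1)) * real m powr (-(e + Re s - 1))"
proof -
  define t where "t n = w ^ (n + m) / of_nat (n + m) powr s" for n
  define u where "u n k = t n * g k (n + m)" for n k
  have u_rows: "summable (\<lambda>k. norm (u n k))" for n
    unfolding u_def norm_mult using rows m by (intro summable_mult) simp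
  have row_sum: "(\<Sum>k. norm (u n k)) = norm (t n) * norm (\<Sum>k. norm (g k (n + m)))" for n
    unfolding u_def norm_mult using rows m by (simp add: suminf_mult suminf_nonneg)
  have row_le: "norm (\<Sum>k. norm (u n k)) \<le> C * real (n + m) powr (-(Re s + e))" for n
    using polylog_layer_term_le[OF w C m, of n s] by (simp add: row_sum t_def abs_mult)
  have row_nonneg: "0 \<le> (\<Sum>k. norm (u n k))" for n
    by (intro suminf_nonneg u_rows) simp
  note total = summable_norm_powr_majorant[OF row_le s m]
  have total': "summable (\<lambda>n. \<Sum>k. norm (u n k))"
    using total(1) by (simp add: abs_of_nonneg[OF row_nonneg])
  have inner: "(\<Sum>k. u n k) = t n * (\<Sum>k. g k (n + m))" for n
    unfolding u_def by (rule suminf_mult, rule summable_norm_cancel) (use rows m in simp)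
  have cols: "(\<Sum>n. u n k) = polylog_layer w s (g k) m" for k
    by (simp add: u_def t_def polylog_layer_def)
  show "(\<lambda>k. polylog_layer w s (g k) m) sums polylog_layer w s (\<lambda>p. \<Sum>k. g k p) m"
    using suminf_swap_summable_norm(1)[OF u_rows total'] by (simp add: cols inner t_def polylog_layer_def)
  show "summable (\<lambda>k. norm (polylog_layer w s (g k) m))"
    using norm_suminf_swap_le(1)[OF u_rows total'] by (simp add: cols)
  have "(\<Sum>k. norm (polylog_layer w s (g k) m)) \<le> (\<Sum>n. \<Sum>k. norm (u n k))"
    using norm_suminf_swap_le(2)[OF u_rows total'] by (simp add: cols)
  also have "\<dots> \<le> C * (2 powr (Re s + e - 1) / (Re s + e - 1)) * real m powr (-(e + Re s - 1))"
    using total(2) by (simp add: abs_of_nonneg[OF row_nonneg] algebra_simps)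
  finally show "(\<Sum>k. norm (polylog_layer w s (g k) m))
                  \<le> C * (2 powr (Re s + e - 1) / (Re s + e - 1)) * real m powr (-(e + Re s - 1))" .
qed

lemma polylog_layer_suminf:
  assumes w: "norm w \<le> 1" and s: "Re s + e > 1" and g: "family_decays e g"
  shows "\<And>m. m \<ge> 2 \<Longrightarrow> (\<lambda>k. polylog_layer w s (g k) m) sums polylog_layer w s (\<lambda>p. \<Sum>k. g k p) m"
    and "family_decays (e + Re s - 1) (\<lambda>k. polylog_layer w s (g k))"
proof -
  have rows: "\<And>p. p \<ge> 2 \<Longrightarrow> summable (\<lambda>k. norm (g k p))"
    using g unfolding family_decays_def by blast
  obtain C where C: "\<And>p. p \<ge> 2 \<Longrightarrow> norm (\<Sum>k. norm (g k p)) \<le> C * real p powr (-e)"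
    using g unfolding family_decays_def decays_def by blast
  note swap = polylog_layer_suminf_swap[OF w s _ rows C]
  show "\<And>m. m \<ge> 2 \<Longrightarrow> (\<lambda>k. polylog_layer w s (g k) m) sums polylog_layer w s (\<lambda>p. \<Sum>k. g k p) m"
    by (rule swap(1))
  have "norm (\<Sum>k. norm (polylog_layer w s (g k) m))
          \<le> C * (2 powr (Re s + e - 1) / (Re s + e - 1)) * real m powr (-(e + Re s - 1))"
    if "m \<ge> 2" for m
  proof -
    have "0 \<le> (\<Sum>k. norm (polylog_layer w s (g k) m))"
      by (intro suminf_nonneg swap(2)[OF that] norm_ge_zero)
    then show ?thesis
      using swap(3)[OF that] by simp
  qed
  then show "family_decays (e + Re s - 1) (\<lambda>k. polylog_layer w s (g k))"
    unfolding family_decays_def decays_def using swap(2) by blast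
qed

fun nested_sum :: "(complex \<times> complex) list \<Rightarrow> (nat \<Rightarrow> complex) \<Rightarrow> nat \<Rightarrow> complex" where
  "nested_sum [] f = f"
| "nested_sum ((w, s) # xs) f = polylog_layer w s (nested_sum xs f)"

lemma nested_sum_append: "nested_sum (xs @ ys) f = nested_sum xs (nested_sum ys f)"
  by (induction xs f rule: nested_sum.induct) simp_all

lemma nested_sum_cong:
  "(\<And>p. p \<ge> m \<Longrightarrow> f p = g p) \<Longrightarrow> nested_sum xs f m = nested_sum xs g m"
proof (induction xs f arbitrary: m rule: nested_sum.induct)
  case (2 w s xs f)
  then show ?case
    by (auto intro: polylog_layer_cong)
qed simp

lemma LiStar_rev_eq_nested_sum: "LiStar_rev xs N = nested_sum xs (\<lambda>_. 1) N"
  by (induction xs N rule: LiStar_rev.induct) (simp_all add: polylog_layer_def)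

lemma LiStar_Cons_eq_nested_sum:
  "LiStar (w # ws) (s # ss) N = nested_sum (rev (zip ws ss)) (polylog_layer w s (\<lambda>_. 1)) N"
  by (simp add: LiStar_def LiStar_rev_eq_nested_sum nested_sum_append)

fun admissible :: "real \<Rightarrow> (complex \<times> complex) list \<Rightarrow> bool" where
  "admissible e [] \<longleftrightarrow> True"
| "admissible e ((w, s) # xs) \<longleftrightarrow>
     admissible e xs \<and> norm w \<le> 1 \<and> Re s + e + (\<Sum>(v, t)\<leftarrow>xs. Re t - 1) > 1"

lemma admissible_append:
  "admissible e (xs @ ys) \<longleftrightarrow> admissible e ys \<and> admissible (e + (\<Sum>(v, t)\<leftarrow>ys. Re t - 1)) xs"
  by (induction e xs rule: admissible.induct) (auto simp: algebra_simps)

lemma admissible_rev_zip: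
  assumes "length ws = length ss" "\<forall>w\<in>set ws. norm w \<le> 1"
    and "\<forall>i. 1 \<le> i \<and> i \<le> length ss \<longrightarrow> e + Re (\<Sum>j<i. ss ! j) > real i"
  shows "admissible e (rev (zip ws ss))"
  using assms
proof (induction ss arbitrary: ws e)
  case (Cons s ss)
  then obtain w ws' where ws: "ws = w # ws'"
    by (cases ws) auto
  have "e + Re s > 1"
    using Cons.prems(3) by (auto dest: spec[of _ 1])
  moreover have "admissible (e + (Re s - 1)) (rev (zip ws' ss))"
  proof (rule Cons.IH, safe)
    fix i assume "1 \<le> i" "i \<le> length ss"
    then have "e + Re (\<Sum>j<Suc i. (s # ss) ! j) > real (Suc i)"
      by (intro Cons.prems(3)[rule_format]) simp
    moreover have "(\<Sum>j<Suc i. (s # ss) ! j) = s + (\<Sum>j<i. ss ! j)"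
      by (simp only: sum.lessThan_Suc_shift) simp
    ultimately have "e + Re (s + (\<Sum>j<i. ss ! j)) > real (Suc i)"
      by (simp only:)
    then show "e + (Re s - 1) + Re (\<Sum>j<i. ss ! j) > real i"
      by simp
  qed (use Cons.prems ws in auto)
  ultimately show ?case
    using Cons.prems(2) ws by (simp add: admissible_append)
qed simp

lemma nested_sum_decays:
  "admissible e xs \<Longrightarrow> decays e f \<Longrightarrow> decays (e + (\<Sum>(v, t)\<leftarrow>xs. Re t - 1)) (nested_sum xs f)"
proof (induction e xs rule: admissible.induct)
  case (2 e w s xs)
  then show ?case
    using polylog_layer_decays[of w s "e + (\<Sum>(v, t)\<leftarrow>xs. Re t - 1)" "nested_sum xs f"]
    by (simp add: algebra_simps)
qed simp

lemma nested_sum_lincomb: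
  assumes "admissible e xs" "decays e f" "decays e g"
    and "\<And>p. p \<ge> 2 \<Longrightarrow> h p = c * f p + d * g p" and "m \<ge> 2"
  shows "nested_sum xs h m = c * nested_sum xs f m + d * nested_sum xs g m"
  using assms
proof (induction e xs arbitrary: m rule: admissible.induct)
  case (2 e w s xs)
  let ?e = "e + (\<Sum>(v, t)\<leftarrow>xs. Re t - 1)"
  have "decays ?e (nested_sum xs f)" "decays ?e (nested_sum xs g)"
    using 2 by (simp_all add: nested_sum_decays)
  moreover have "nested_sum xs h p = c * nested_sum xs f p + d * nested_sum xs g p" if "p \<ge> 2" for p
    using 2 that by simp
  ultimately show ?case
    using 2 by (simp add: polylog_layer_lincomb[of w s ?e] add.commute add.left_commute)
qed simp

corollary nested_sum_cmult:
  assumes "admissible e xs" "decays e f" "\<And>p. p \<ge> 2 \<Longrightarrow> h p = c * f p" "m \<ge> 2"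
  shows "nested_sum xs h m = c * nested_sum xs f m"
  using nested_sum_lincomb[OF assms(1,2,2), of h c 0, OF _ assms(4)] assms(3) by simp

lemma family_decays_nested_sum:
  "admissible e xs \<Longrightarrow> family_decays e g \<Longrightarrow>
     family_decays (e + (\<Sum>(v, t)\<leftarrow>xs. Re t - 1)) (\<lambda>k. nested_sum xs (g k))"
proof (induction e xs rule: admissible.induct)
  case (2 e w s xs)
  then show ?case
    using polylog_layer_suminf(2)[of w s "e + (\<Sum>(v, t)\<leftarrow>xs. Re t - 1)" "\<lambda>k. nested_sum xs (g k)"]
    by (simp add: algebra_simps)
qed (simp add: eta_contract_eq)

lemma nested_sum_suminf:
  assumes "admissible e xs" "family_decays e g" "m \<ge> 2"
  shows "(\<lambda>k. nested_sum xs (g k) m) sums nested_sum xs (\<lambda>p. \<Sum>k. g k p) m"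
  using assms
proof (induction e xs arbitrary: m rule: admissible.induct)
  case (1 e)
  then show ?case
    unfolding family_decays_def by (simp add: summable_sums summable_norm_cancel)
next
  case (2 e w s xs)
  let ?e = "e + (\<Sum>(v, t)\<leftarrow>xs. Re t - 1)"
  have "family_decays ?e (\<lambda>k. nested_sum xs (g k))"
    using 2 by (simp add: family_decays_nested_sum)
  then have "(\<lambda>k. polylog_layer w s (nested_sum xs (g k)) m)
               sums polylog_layer w s (\<lambda>p. \<Sum>k. nested_sum xs (g k) p) m"
    using 2 by (intro polylog_layer_suminf(1)) (simp_all add: add.commute add.left_commute)
  also have "polylog_layer w s (\<lambda>p. \<Sum>k. nested_sum xs (g k) p) m
               = polylog_layer w s (nested_sum xs (\<lambda>p. \<Sum>k. g k p)) m"
    using 2 by (intro polylog_layer_cong) (simp add: sums_iff)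
  finally show ?case
    by simp
qed

section \<open>The innermost layer\<close>

lemma gbinomial_Suc_eq_pochhammer:
  fixes a :: "'a::field_char_0"
  shows "- ((1 - a) gchoose Suc k) = (- 1) ^ k * pochhammer (a - 1) (k + 1) / fact (k + 1)"
  by (simp add: gbinomial_pochhammer)

lemma summable_norm_gbinomial_Suc_div_power:
  fixes a :: "'a::{real_normed_field,banach}"
  shows "summable (\<lambda>k. norm ((a gchoose Suc k) / 2 ^ k))"
proof -
  have "summable (\<lambda>n. norm ((a gchoose n) * (1 / 2) ^ n))"
    by (rule abs_summable_in_conv_radius) (simp add: conv_radius_gchoose norm_divide)
  then have "summable (\<lambda>k. 2 * norm ((a gchoose Suc k) * (1 / 2) ^ Suc k))"
    by (subst summable_Suc_iff) (rule summable_mult)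
  then show ?thesis
    by (simp add: norm_mult norm_divide norm_power power_one_over)
qed

lemma family_decays_gbinomial:
  fixes a :: complex
  shows "family_decays 0 (\<lambda>k q. - ((1 - a) gchoose Suc k) / of_nat q ^ k)"
proof -
  define c where "c k = norm (((1 - a) gchoose Suc k) / 2 ^ k)" for k
  have c: "summable c"
    unfolding c_def by (rule summable_norm_gbinomial_Suc_div_power)
  have le: "norm (- ((1 - a) gchoose Suc k) / of_nat q ^ k) \<le> c k" if "q \<ge> 2" for k q
    unfolding c_def norm_divide norm_minus_cancel norm_power norm_of_nat using that
    by (intro divide_left_mono power_mono) auto
  have rows: "summable (\<lambda>k. norm (- ((1 - a) gchoose Suc k) / of_nat q ^ k))" if "q \<ge> 2" for q
    by (rule summable_comparison_test'[OF c]) (use le that in simp)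
  have "norm (\<Sum>k. norm (- ((1 - a) gchoose Suc k) / of_nat q ^ k)) \<le> suminf c * real q powr (-0)"
    if "q \<ge> 2" for q
  proof -
    have "0 \<le> (\<Sum>k. norm (- ((1 - a) gchoose Suc k) / of_nat q ^ k))"
      by (intro suminf_nonneg rows[OF that]) simp
    then show ?thesis
      using suminf_le[OF le[OF that] rows[OF that] c] that by simp
  qed
  then show ?thesis
    unfolding family_decays_def decays_def using rows by blast
qed

lemma gbinomial_tail_sums:
  fixes a :: complex
  assumes "q \<ge> 2"
  shows "(\<lambda>k. - ((1 - a) gchoose Suc k) / of_nat q powr (a + of_nat k))
           sums (of_nat q powr (1 - a) - of_nat (Suc q) powr (1 - a))"
proof -
  define T where "T n = ((1 - a) gchoose n) * of_real 1 ^ n * of_real (real q) powr ((1 - a) - of_nat n)"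
    for n
  have "T sums of_real (1 + real q) powr (1 - a)"
    unfolding T_def by (rule gen_binomial_complex') (use assms in simp)
  then have "(\<lambda>k. T (Suc k)) sums (of_nat (Suc q) powr (1 - a) - of_nat q powr (1 - a))"
    by (subst sums_Suc_iff) (simp add: T_def)
  moreover have "T (Suc k) = ((1 - a) gchoose Suc k) / of_nat q powr (a + of_nat k)" for k
    using powr_minus_divide[of "of_nat q :: complex" "a + of_nat k"] by (simp add: T_def)
  ultimately show ?thesis
    using sums_minus by fastforce
qed

lemma polylog_layer_gbinomial_term:
  assumes w: "norm w \<le> 1" and a: "Re a > 1" and p: "p \<ge> 2"
  shows "polylog_layer w a (\<lambda>q. c / of_nat q ^ k) p = c * polylog_layer w (a + of_nat k) (\<lambda>_. 1) p"
proof -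
  have "of_nat (n + p) powr (a + of_nat k) = of_nat (n + p) powr a * of_nat (n + p) ^ k" for n
    by (subst powr_add, subst powr_nat') (use p in \<open>auto simp del: of_nat_add\<close>)
  then have "w ^ (n + p) / of_nat (n + p) powr a * (c / of_nat (n + p) ^ k)
               = c * (w ^ (n + p) / of_nat (n + p) powr (a + of_nat k) * 1)" for n
    by simp
  moreover have "summable (\<lambda>n. w ^ (n + p) / of_nat (n + p) powr (a + of_nat k) * 1)"
    by (rule summable_norm_cancel, rule polylog_layer_summable[OF w _ decays_const p]) (use a in simp)
  ultimately show ?thesis
    unfolding polylog_layer_def by (simp only: suminf_mult)
qed

definition telescoped_tail :: "complex \<Rightarrow> complex \<Rightarrow> nat \<Rightarrow> complex" where
  "telescoped_tail w a p =
     (1 - 1 / w) * (if w = 1 then 0 else polylog_layer w (a - 1) (\<lambda>_. 1) p)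
     + w ^ (p - 1) / of_nat p powr (a - 1)"

lemma power_mult_powr_tendsto_zero:
  assumes "norm w \<le> 1" "Re a > 1"
  shows "(\<lambda>n. w ^ (n + p) * of_nat (n + p) powr (1 - a)) \<longlonglongrightarrow> 0"
proof -
  have "(\<lambda>n. real n powr (1 - Re a)) \<longlonglongrightarrow> 0"
    by (rule tendsto_neg_powr[OF _ filterlim_real_sequentially]) (use assms in simp)
  then have lim: "(\<lambda>n. real (n + p) powr (1 - Re a)) \<longlonglongrightarrow> 0"
    by (rule LIMSEQ_ignore_initial_segment)
  have "norm (w ^ (n + p) * of_nat (n + p) powr (1 - a)) \<le> real (n + p) powr (1 - Re a)" for n
  proof -
    have "norm (w ^ (n + p)) \<le> 1"
      using assms(1) by (simp add: norm_power power_le_one)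
    moreover have "norm (of_nat (n + p) powr (1 - a) :: complex) = real (n + p) powr (1 - Re a)"
      by (subst norm_powr_real_powr) auto
    ultimately show ?thesis
      by (simp add: norm_mult mult_left_le_one_le)
  qed
  then show ?thesis
    by (intro Lim_null_comparison[OF _ lim] always_eventually allI)
qed

lemma sums_telescoped_tail:
  assumes w: "norm w \<le> 1" "w \<noteq> 0" and a: "Re a > 1" and p: "p \<ge> 1"
    and S: "summable (\<lambda>n. w ^ (n + p) * (of_nat (n + p) powr (1 - a) - of_nat (Suc (n + p)) powr (1 - a)))"
  shows "(\<lambda>n. w ^ (n + p) * (of_nat (n + p) powr (1 - a) - of_nat (Suc (n + p)) powr (1 - a)))
           sums telescoped_tail w a p"
proof -
  define A where "A n = w ^ (n + p) * of_nat (n + p) powr (1 - a)" for n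
  have terms: "w ^ (n + p) * (of_nat (n + p) powr (1 - a) - of_nat (Suc (n + p)) powr (1 - a))
                 = A n - A (Suc n) / w" for n
    using w(2) by (simp add: A_def algebra_simps)
  have X: "(\<lambda>n. A n - A (Suc n) / w) sums (\<Sum>n. A n - A (Suc n) / w)"
    using S unfolding terms by (rule summable_sums)
  have "suminf A = polylog_layer w (a - 1) (\<lambda>_. 1) p"
    unfolding polylog_layer_def A_def
    using powr_minus_divide[of "of_nat (n + p) :: complex" "a - 1" for n] by (simp add: divide_inverse)
  moreover have "A 0 / w = w ^ (p - 1) / of_nat p powr (a - 1)"
  proof -
    have "w ^ p = w * w ^ (p - 1)"
      using p by (simp add: power_eq_if)
    then show ?thesis
      using w(2) powr_minus_divide[of "of_nat p :: complex" "a - 1"] by (simp add: A_def)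
  qed
  ultimately have "(\<Sum>n. A n - A (Suc n) / w) = telescoped_tail w a p"
    using sums_telescope_div[OF _ w(2) X] power_mult_powr_tendsto_zero[OF w(1) a]
    by (simp add: A_def telescoped_tail_def)
  then show ?thesis
    using X unfolding terms by simp
qed

lemma polylog_layer_gbinomial_sum:
  assumes w: "norm w \<le> 1" "w \<noteq> 0" and a: "Re a > 1" and p: "p \<ge> 2"
  shows "polylog_layer w a (\<lambda>q. \<Sum>k. - ((1 - a) gchoose Suc k) / of_nat q ^ k) p = telescoped_tail w a p"
proof -
  define H where "H = (\<lambda>q. \<Sum>k. - ((1 - a) gchoose Suc k) / of_nat q ^ k)"
  have H: "H q / of_nat q powr a = of_nat q powr (1 - a) - of_nat (Suc q) powr (1 - a)" if q: "q \<ge> 2" for q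
  proof -
    have "summable (\<lambda>k. - ((1 - a) gchoose Suc k) / of_nat q ^ k)"
      using family_decays_gbinomial[of a] q unfolding family_decays_def
      by (blast intro: summable_norm_cancel)
    then have "(\<lambda>k. - ((1 - a) gchoose Suc k) / of_nat q ^ k / of_nat q powr a) sums (H q / of_nat q powr a)"
      unfolding H_def by (intro sums_divide summable_sums)
    moreover have "of_nat q powr (a + of_nat k) = of_nat q powr a * of_nat q ^ k" for k
      by (subst powr_add, subst powr_nat') (use q in auto)
    ultimately show ?thesis
      using gbinomial_tail_sums[OF q, of a] by (simp add: sums_iff mult.commute)
  qed
  have terms: "w ^ (n + p) / of_nat (n + p) powr a * H (n + p)
      = w ^ (n + p) * (of_nat (n + p) powr (1 - a) - of_nat (Suc (n + p)) powr (1 - a))" for n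
  proof -
    have "w ^ (n + p) / of_nat (n + p) powr a * H (n + p) = w ^ (n + p) * (H (n + p) / of_nat (n + p) powr a)"
      by simp
    also have "\<dots> = w ^ (n + p) * (of_nat (n + p) powr (1 - a) - of_nat (Suc (n + p)) powr (1 - a))"
      by (subst H) (use p in auto)
    finally show ?thesis .
  qed
  have "summable (\<lambda>n. w ^ (n + p) / of_nat (n + p) powr a * H (n + p))"
    unfolding H_def
    by (rule summable_norm_cancel,
        rule polylog_layer_summable[OF w(1) _ decays_suminf[OF family_decays_gbinomial[of a]] p])
       (use a in simp)
  then have "summable (\<lambda>n. w ^ (n + p) * (of_nat (n + p) powr (1 - a) - of_nat (Suc (n + p)) powr (1 - a)))"
    unfolding terms .
  from sums_unique[OF sums_telescoped_tail[OF w a _ this]] p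
  show ?thesis
    unfolding H_def[symmetric] polylog_layer_def terms by simp
qed

lemma decays_telescoped_tail:
  assumes "norm w \<le> 1" "w \<noteq> 0" "Re a > 1"
  shows "decays (Re a - 1) (telescoped_tail w a)"
proof -
  have "decays (0 + Re a - 1) (polylog_layer w a (\<lambda>q. \<Sum>k. - ((1 - a) gchoose Suc k) / of_nat q ^ k))"
    by (rule polylog_layer_decays[OF assms(1) _ decays_suminf[OF family_decays_gbinomial[of a]]])
       (use assms(3) in simp)
  then have "decays (Re a - 1) (polylog_layer w a (\<lambda>q. \<Sum>k. - ((1 - a) gchoose Suc k) / of_nat q ^ k))"
    by simp
  then show ?thesis
    by (rule decays_cong) (erule polylog_layer_gbinomial_sum[OF assms, symmetric])
qed

lemma decays_power_div_powr:
  assumes "norm w \<le> 1"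
  shows "decays (Re a - 1) (\<lambda>p. w ^ (p - 1) / of_nat p powr (a - 1))"
proof -
  have "norm (w ^ (p - 1) / of_nat p powr (a - 1)) \<le> 1 * real p powr (-(Re a - 1))" if "p \<ge> 2" for p
  proof -
    have "norm (w ^ (p - 1)) \<le> 1"
      using assms by (simp add: norm_power power_le_one)
    then have "norm (w ^ (p - 1) / of_nat p powr (a - 1)) \<le> 1 / real p powr (Re a - 1)"
      using that by (simp add: norm_divide norm_powr_real_powr divide_right_mono)
    then show ?thesis
      using powr_minus_divide[of "real p" "Re a - 1"] by simp
  qed
  then show ?thesis
    unfolding decays_def by blast
qed

lemma polylog_layer_merge:
  assumes "w \<noteq> 0" "norm (w * v) \<le> 1" "Re (a + b - 1) > 1" "q \<ge> 2"
  shows "polylog_layer v b (\<lambda>p. w ^ (p - 1) / of_nat p powr (a - 1)) q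
           = 1 / w * polylog_layer (w * v) (a + b - 1) (\<lambda>_. 1) q"
proof -
  have "v ^ (n + q) / of_nat (n + q) powr b * (w ^ (n + q - 1) / of_nat (n + q) powr (a - 1))
          = 1 / w * ((w * v) ^ (n + q) / of_nat (n + q) powr (a + b - 1) * 1)" for n
  proof -
    have "w ^ (n + q) = w * w ^ (n + q - 1)"
      using assms(4) by (simp add: power_eq_if)
    moreover have "of_nat (n + q) powr (a + b - 1) = of_nat (n + q) powr b * (of_nat (n + q) powr (a - 1) :: complex)"
      by (simp add: powr_add[symmetric] algebra_simps)
    ultimately show ?thesis
      using assms(1,4) by (simp add: power_mult_distrib field_simps)
  qed
  moreover have "summable (\<lambda>n. (w * v) ^ (n + q) / of_nat (n + q) powr (a + b - 1) * 1)"
    by (rule summable_norm_cancel, rule polylog_layer_summable[OF assms(2) _ decays_const assms(4)])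
       (use assms(3) in simp)
  ultimately show ?thesis
    unfolding polylog_layer_def by (simp only: suminf_mult)
qed

lemma LiStar_gbinomial_sums:
  assumes adm: "admissible 0 (rev (zip (w # ws) (a # ss)))" and w: "w \<noteq> 0" and N: "N \<ge> 2"
  shows "(\<lambda>k. - ((1 - a) gchoose Suc k) * LiStar (w # ws) ((a + of_nat k) # ss) N)
           sums nested_sum (rev (zip ws ss)) (telescoped_tail w a) N"
proof -
  define outer where "outer = rev (zip ws ss)"
  \<comment> \<open>The layer \<open>(w, a)\<close> applied to \<open>h k\<close> is the layer \<open>(w, a + k)\<close> scaled by \<open>c_k(a)\<close>.\<close>
  define h where "h = (\<lambda>k q. - ((1 - a) gchoose Suc k) / of_nat q ^ k)"
  have adm': "admissible 0 (outer @ [(w, a)])"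
    using adm by (simp add: outer_def)
  then have w1: "norm w \<le> 1" and a: "Re a > 1" and adm_outer: "admissible (Re a - 1) outer"
    by (simp_all add: admissible_append)
  have "(\<lambda>k. nested_sum (outer @ [(w, a)]) (h k) N) sums nested_sum (outer @ [(w, a)]) (\<lambda>q. \<Sum>k. h k q) N"
    unfolding h_def by (rule nested_sum_suminf[OF adm' family_decays_gbinomial N])
  moreover have "nested_sum (outer @ [(w, a)]) (h k) N
                   = - ((1 - a) gchoose Suc k) * LiStar (w # ws) ((a + of_nat k) # ss) N" for k
  proof -
    have "decays (0 + Re (a + of_nat k) - 1) (polylog_layer w (a + of_nat k) (\<lambda>_. 1))"
      using a by (intro polylog_layer_decays[OF w1 _ decays_const]) simp
    then have dec: "decays (Re a - 1) (polylog_layer w (a + of_nat k) (\<lambda>_. 1))"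
      by (rule decays_mono) simp
    have "polylog_layer w a (h k) p = - ((1 - a) gchoose Suc k) * polylog_layer w (a + of_nat k) (\<lambda>_. 1) p"
      if "p \<ge> 2" for p
      unfolding h_def by (rule polylog_layer_gbinomial_term[OF w1 a that])
    then show ?thesis
      unfolding nested_sum_append nested_sum.simps LiStar_Cons_eq_nested_sum outer_def[symmetric]
      by (rule nested_sum_cmult[OF adm_outer dec _ N])
  qed
  moreover have "nested_sum (outer @ [(w, a)]) (\<lambda>q. \<Sum>k. h k q) N = nested_sum outer (telescoped_tail w a) N"
    unfolding nested_sum_append nested_sum.simps h_def
    by (intro nested_sum_cong polylog_layer_gbinomial_sum[OF w1 w a]) (use N in linarith)
  ultimately show ?thesis
    by (simp add: outer_def)
qed

lemma nested_sum_boundary_term: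
  assumes adm: "admissible 0 (xs @ [(v, b), (w, a)])" and w: "w \<noteq> 0" and N: "N \<ge> 2"
  shows "nested_sum (xs @ [(v, b)]) (\<lambda>p. w ^ (p - 1) / of_nat p powr (a - 1)) N
           = 1 / w * nested_sum xs (polylog_layer (w * v) (a + b - 1) (\<lambda>_. 1)) N"
proof -
  have wv: "norm (w * v) \<le> 1"
    using adm by (simp add: admissible_append norm_mult mult_le_one)
  have ab: "Re (a + b - 1) > 1"
    using adm by (simp add: admissible_append)
  have "Re (a + b - 1) - 1 = 0 + (\<Sum>(u, t)\<leftarrow>[(v, b), (w, a)]. Re t - 1)"
    by simp
  then have adm_xs: "admissible (Re (a + b - 1) - 1) xs"
    using adm by (simp only: admissible_append)
  have "decays (0 + Re (a + b - 1) - 1) (polylog_layer (w * v) (a + b - 1) (\<lambda>_. 1))"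
    using ab by (intro polylog_layer_decays[OF wv _ decays_const]) simp
  moreover have "polylog_layer v b (\<lambda>p. w ^ (p - 1) / of_nat p powr (a - 1)) p
                   = 1 / w * polylog_layer (w * v) (a + b - 1) (\<lambda>_. 1) p" if "p \<ge> 2" for p
    by (rule polylog_layer_merge[OF w wv ab that])
  ultimately show ?thesis
    unfolding nested_sum_append nested_sum.simps using N
    by (intro nested_sum_cmult[OF adm_xs]) simp_all
qed

lemma nested_sum_telescoped_tail:
  assumes adm: "admissible 0 (xs @ [(v, b), (w, a)])" and w: "w \<noteq> 0" and N: "N \<ge> 2"
  shows "nested_sum (xs @ [(v, b)]) (telescoped_tail w a) N =
           (1 - 1 / w) * (if w = 1 then 0 else nested_sum (xs @ [(v, b)]) (polylog_layer w (a - 1) (\<lambda>_. 1)) N)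
           + 1 / w * nested_sum xs (polylog_layer (w * v) (a + b - 1) (\<lambda>_. 1)) N"
proof -
  define B where "B = (\<lambda>p. w ^ (p - 1) / of_nat p powr (a - 1))"
  have "admissible 0 ((xs @ [(v, b)]) @ [(w, a)])"
    using adm by simp
  then have w1: "norm w \<le> 1" and a: "Re a > 1" and adm1: "admissible (Re a - 1) (xs @ [(v, b)])"
    unfolding admissible_append[of 0 "xs @ [(v, b)]"] by simp_all
  have B_part: "nested_sum (xs @ [(v, b)]) B N = 1 / w * nested_sum xs (polylog_layer (w * v) (a + b - 1) (\<lambda>_. 1)) N"
    unfolding B_def by (rule nested_sum_boundary_term[OF adm w N])
  show ?thesis
  proof (cases "w = 1")
    case True
    then have "telescoped_tail w a = B"
      by (simp add: fun_eq_iff telescoped_tail_def B_def)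
    then show ?thesis
      using B_part True by simp
  next
    case False
    define F where "F = polylog_layer w (a - 1) (\<lambda>_. 1)"
    define c where "c = 1 - 1 / w"
    have c: "c \<noteq> 0"
      using False by (simp add: c_def field_simps)
    have T: "telescoped_tail w a p = c * F p + 1 * B p" for p
      using False by (simp add: telescoped_tail_def F_def B_def c_def)
    have decB: "decays (Re a - 1) B"
      unfolding B_def by (rule decays_power_div_powr[OF w1])
    have "decays (Re a - 1) F"
      by (rule decays_lincomb[OF decays_telescoped_tail[OF w1 w a] decB, of _ "1 / c" "- 1 / c"])
         (use c in \<open>simp add: T field_simps\<close>)
    then have "nested_sum (xs @ [(v, b)]) (telescoped_tail w a) N
                 = c * nested_sum (xs @ [(v, b)]) F N + 1 * nested_sum (xs @ [(v, b)]) B N"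
      using N by (intro nested_sum_lincomb[OF adm1 _ decB]) (simp_all add: T)
    then show ?thesis
      using B_part False by (simp add: F_def c_def)
  qed
qed

theorem proposition1:
  fixes N r :: nat and z s :: "complex list"
  assumes "N \<ge> 2" and "r \<ge> 1"
    and "length z = r" and "length s = r"
    and "\<forall>i<r. norm (z ! i) \<le> 1"
    and "z ! 0 \<noteq> 0"
    and "U_dom s"
  shows "(r = 1 \<longrightarrow>
           (\<lambda>k. (-1) ^ k * pochhammer (s ! 0 - 1) (k + 1) / fact (k + 1)
                  * LiStar [z ! 0] [s ! 0 + of_nat k] N)
           sums ((1 - 1 / z ! 0) * (if z ! 0 = 1 then 0 else LiStar [z ! 0] [s ! 0 - 1] N)
                 + (z ! 0) ^ (N - 1) / (of_nat N) powr (s ! 0 - 1)))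
       \<and> (r > 1 \<longrightarrow>
           (\<lambda>k. (-1) ^ k * pochhammer (s ! 0 - 1) (k + 1) / fact (k + 1)
                  * LiStar z ((s ! 0 + of_nat k) # tl s) N)
           sums ((1 - 1 / z ! 0) * (if z ! 0 = 1 then 0 else LiStar z ((s ! 0 - 1) # tl s) N)
                 + 1 / z ! 0 * LiStar ((z ! 0 * z ! 1) # drop 2 z) ((s ! 0 + s ! 1 - 1) # drop 2 s) N))"
proof -
  obtain x zs a ss where z: "z = x # zs" and s: "s = a # ss"
    using assms(2-4) by (cases z; cases s) auto
  have adm: "admissible 0 (rev (zip z s))"
    using assms(3-5,7) unfolding U_dom_def
    by (intro admissible_rev_zip) (auto simp: in_set_conv_nth)
  have sums: "(\<lambda>k. (-1) ^ k * pochhammer (a - 1) (k + 1) / fact (k + 1) * LiStar z ((a + of_nat k) # ss) N)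
                sums nested_sum (rev (zip zs ss)) (telescoped_tail x a) N"
    using LiStar_gbinomial_sums[of x zs a ss N] adm assms(1,6)
    by (simp add: z s gbinomial_Suc_eq_pochhammer)
  show ?thesis (is "(_ \<longrightarrow> ?depth_one) \<and> (_ \<longrightarrow> ?depth_many)")
  proof (intro conjI impI)
    assume "r = 1"
    then have "zs = []" "ss = []"
      using assms(3,4) z s by simp_all
    moreover have "LiStar [x] [c] N = polylog_layer x c (\<lambda>_. 1) N" for c
      by (simp add: LiStar_Cons_eq_nested_sum)
    ultimately show ?depth_one
      using sums by (simp only: z s nth_Cons_0 zip_Nil rev.simps nested_sum.simps telescoped_tail_def)
  next
    assume "r > 1"
    then obtain y zr b sr where zs: "zs = y # zr" and ss: "ss = b # sr"
      using assms(3,4) z s by (cases zs; cases ss) auto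
    have "nested_sum (rev (zip zs ss)) (telescoped_tail x a) N
            = (1 - 1 / x) * (if x = 1 then 0 else LiStar (x # zs) ((a - 1) # ss) N)
              + 1 / x * LiStar ((x * y) # zr) ((a + b - 1) # sr) N"
      using nested_sum_telescoped_tail[of "rev (zip zr sr)" y b x a N] adm assms(1,6)
      by (simp add: z s zs ss LiStar_Cons_eq_nested_sum)
    then show ?depth_many
      using sums unfolding z s zs ss by (simp cong: if_cong split del: if_split)
  qed
qed

end
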